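(* Let $\gamma\in\mathbb{C}$ with $\Re\gamma>0$, $\Im\gamma<0$, and let $N>|\gamma|/\pi$ be an integer. If $0<\Re z<1$, then \[ T_N\left(z-\frac{\gamma}{2N}\right)-T_N\left(z+\frac{\gamma}{2N}\right)=\mathcal{L}_1(z). \]
   Context: $T_N(z):=\frac14\int_{\mathcal{R}}\frac{e^{(2z-1)x}}{x\sinh(x)\sinh(\gamma x/N)}dx$ for $-\frac{\Re\gamma}{2N}<\Re z<1+\frac{\Re\gamma}{2N}$, where $\mathcal{R}:=(-\infty,-1]\cup\{|w|=1,\Im w\ge0\}\cup[1,\infty)$ oriented from $-\infty$ to $\infty$. On $\mathbb{C}\setminus((-\infty,0]\cup[1,\infty))$, $\mathcal{L}_1(z):=\log(1-e^{2\pi iz})$ if $\Im z\ge0$ and $\mathcal{L}_1(z):=\pi i(2z-1)+\log(1-e^{-2\pi iz})$ if $\Im z<0$, with principal $\log$ (cut $(-\infty,0]$). *)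

theory Defs
  imports "HOL-Complex_Analysis.Complex_Analysis"
begin

definition TN_integrand :: "nat \<Rightarrow> complex \<Rightarrow> complex \<Rightarrow> complex \<Rightarrow> complex" where
  "TN_integrand N \<gamma> z x =
     exp ((2 * z - 1) * x) / (x * sinh x * sinh (\<gamma> * x / of_nat N))"

definition T_N :: "nat \<Rightarrow> complex \<Rightarrow> complex \<Rightarrow> complex" where
  "T_N N \<gamma> z = (1/4) *
     (integral {..-1} (\<lambda>x::real. TN_integrand N \<gamma> z (of_real x))
      + contour_integral (part_circlepath 0 1 pi 0) (TN_integrand N \<gamma> z)
      + integral {1..} (\<lambda>x::real. TN_integrand N \<gamma> z (of_real x)))"

definition L1 :: "complex \<Rightarrow> complex" where
  "L1 z = (if Im z \<ge> 0 then Ln (1 - exp (2 * pi * \<i> * z))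
           else pi * \<i> * (2 * z - 1) + Ln (1 - exp (- 2 * pi * \<i> * z)))"

end

theory Submission
  imports Defs "HOL-Real_Asymp.Real_Asymp"
begin

text \<open>
  With \<open>w = 2 z - 1\<close>, the two integrands defining \<open>T_N\<close> differ by \<open>-2 exp (w x) / (x sinh x)\<close>,
  so the left-hand side is \<open>-1/2\<close> times the integral of this kernel over the indented line \<open>R\<close>.
  By Cauchy's theorem \<open>R\<close> can be replaced by the horizontal line \<open>Im x = pi / 2\<close>. Moving this
  line up (if \<open>Im z > 0\<close>) or down (if \<open>Im z < 0\<close>) across the poles \<open>i pi m\<close>, where the
  integrals over far-away lines tend to \<open>0\<close>, the residue theorem turns the integral into the series
  of residue terms \<open>2 exp (i pi m (w + 1)) / m\<close>, plus the contribution of the residue \<open>w\<close> of the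
  double pole at \<open>0\<close> when moving down. The logarithmic series sums this to \<open>-2 L_1 z\<close>. The case
  \<open>Im z = 0\<close> follows by continuity from above.
\<close>

section \<open>The hyperbolic sine on the complex plane\<close>

lemma Re_sinh_complex: "Re (sinh z) = sinh (Re z) * cos (Im z)"
  by (simp add: sinh_def Re_exp scaleR_conv_of_real field_simps)

lemma Im_sinh_complex: "Im (sinh z) = cosh (Re z) * sin (Im z)"
  by (simp add: sinh_def cosh_def Im_exp scaleR_conv_of_real field_simps)

lemma norm_sinh_complex_squared: "(cmod (sinh z))\<^sup>2 = (sinh (Re z))\<^sup>2 + (sin (Im z))\<^sup>2"
proof -
  have "(cmod (sinh z))\<^sup>2 = (sinh (Re z) * cos (Im z))\<^sup>2 + (cosh (Re z) * sin (Im z))\<^sup>2"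
    by (simp add: cmod_power2 Re_sinh_complex Im_sinh_complex)
  also have "\<dots> = (sinh (Re z))\<^sup>2 + (sin (Im z))\<^sup>2"
    by (simp add: cosh_square_eq cos_squared_eq algebra_simps)
  finally show ?thesis .
qed

lemma abs_sinh_Re_le_norm_sinh: "\<bar>sinh (Re z)\<bar> \<le> cmod (sinh z)"
  using abs_le_square_iff[of "sinh (Re z)" "cmod (sinh z)"] by (simp add: norm_sinh_complex_squared)

lemma sinh_complex_eq_0_iff: "sinh z = 0 \<longleftrightarrow> (\<exists>k::int. z = \<i> * (of_int k * pi))"
proof -
  have "sinh z = 0 \<longleftrightarrow> (cmod (sinh z))\<^sup>2 = 0" by simp
  also have "\<dots> \<longleftrightarrow> Re z = 0 \<and> sin (Im z) = 0"
    unfolding norm_sinh_complex_squared by simp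
  finally show ?thesis
    unfolding sin_zero_iff_int2 by (auto simp: complex_eq_iff)
qed

lemma sinh_nonzero_if_Re_nonzero: "Re z \<noteq> 0 \<Longrightarrow> sinh z \<noteq> 0"
  by (auto simp: sinh_complex_eq_0_iff)

lemma sinh_nonzero_if_norm_less_pi:
  assumes "z \<noteq> 0" "cmod z < pi"
  shows "sinh z \<noteq> 0"
proof
  assume "sinh z = 0"
  then obtain k :: int where k: "z = \<i> * (of_int k * pi)"
    by (auto simp: sinh_complex_eq_0_iff)
  with assms(1) have "1 \<le> \<bar>real_of_int k\<bar>" by auto
  then have "pi \<le> cmod z" by (simp add: k norm_mult)
  with assms(2) show False by simp
qed

lemma sinh_ge_exp_mult:
  fixes r s :: real
  assumes "0 < r" "r \<le> s"
  shows "(1 - exp (- 2 * r)) / 2 * exp s \<le> sinh s"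
proof -
  have "exp (- s) = exp (- 2 * s) * exp s" by (simp flip: exp_add)
  also have "\<dots> \<le> exp (- 2 * r) * exp s" using assms by simp
  finally show ?thesis by (simp add: sinh_def field_simps)
qed

lemma sinh_ge_exp_div_4:
  fixes t :: real
  assumes "1 \<le> t"
  shows "exp t / 4 \<le> sinh t"
proof -
  have "1 + 2 \<le> exp (2::real)" using exp_ge_add_one_self[of 2] by simp
  then have "exp (- 2) \<le> (1/2::real)" by (simp add: exp_minus field_simps)
  then have "exp t / 4 \<le> (1 - exp (- 2 * 1)) / 2 * exp t" by (simp add: field_simps)
  also have "\<dots> \<le> sinh t" using assms by (intro sinh_ge_exp_mult) auto
  finally show ?thesis .
qed

lemma cosh_ge_exp_abs_div_2: "exp \<bar>t\<bar> / 2 \<le> cosh (t::real)"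
  by (cases "t \<ge> 0") (auto simp: cosh_def)

lemma holomorphic_on_sinh [holomorphic_intros]:
  "f holomorphic_on A \<Longrightarrow> (\<lambda>x. sinh (f x :: complex)) holomorphic_on A"
  unfolding sinh_field_def by (auto intro!: holomorphic_intros)

definition sinhc :: "complex \<Rightarrow> complex" where
  "sinhc y = (if y = 0 then 1 else sinh y / y)"

lemma sinh_eq_mult_sinhc: "sinh y = y * sinhc y"
  by (simp add: sinhc_def)

lemma holomorphic_sinhc: "sinhc holomorphic_on UNIV"
proof -
  have "(sinh has_field_derivative cosh 0) (at (0::complex))"
    using DERIV_ident[THEN has_field_derivative_sinh, of 0] by simp
  then have "((\<lambda>y. (sinh y - sinh 0) / (y - 0)) \<longlongrightarrow> cosh 0) (at (0::complex))"
    by (simp only: has_field_derivative_iff)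
  then have "(\<lambda>y::complex. sinh y / y) \<midarrow>0\<rightarrow> 1" by simp
  then have "(\<lambda>y. if y = 0 then 1 else sinh y / y) holomorphic_on UNIV"
    by (intro removable_singularity) (auto intro!: holomorphic_intros)
  then show ?thesis unfolding sinhc_def[abs_def] .
qed

lemma sinhc_nonzero: "cmod y < pi \<Longrightarrow> sinhc y \<noteq> 0"
  using sinh_nonzero_if_norm_less_pi[of y] by (auto simp: sinhc_def)

lemma has_field_derivative_sinhc_0: "(sinhc has_field_derivative 0) (at 0)"
proof -
  obtain D where D: "(sinhc has_field_derivative D) (at 0)"
    using holomorphic_sinhc holomorphic_on_imp_differentiable_at field_differentiable_def by blast
  have minus: "((\<lambda>y::complex. - y) has_field_derivative - 1) (at 0)"
    by (auto intro!: derivative_eq_intros)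
  have "((\<lambda>y. sinhc (- y)) has_field_derivative D * (- 1)) (at 0)"
    using DERIV_chain2[OF _ minus, of sinhc D] D by simp
  moreover have "sinhc (- y) = sinhc y" for y
    by (simp add: sinhc_def)
  ultimately have "(sinhc has_field_derivative - D) (at 0)" by simp
  with D have "D = - D" by (rule DERIV_unique)
  then have "D = 0" by simp
  with D show ?thesis by simp
qed

section \<open>Integrals over the real line\<close>

lemma continuous_bounded_by_integrable_imp_integrable:
  fixes f :: "'a::euclidean_space \<Rightarrow> 'b::euclidean_space"
  assumes "continuous_on S f" "S \<in> sets lebesgue" "g integrable_on S"
    and "\<And>x. x \<in> S \<Longrightarrow> norm (f x) \<le> g x"
  shows "f integrable_on S"
  using measurable_bounded_by_integrable_imp_integrable
      continuous_imp_measurable_on_sets_lebesgue assms by blast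

lemma exp_neg_abs_integrable_atLeast:
  fixes d c :: real
  assumes "0 < d" "0 \<le> c"
  shows "(\<lambda>t. exp (- d * \<bar>t\<bar>)) integrable_on {c..}"
  by (rule integrable_eq[OF integrable_on_exp_minus_to_infinity[OF assms(1)]]) (use assms in auto)

lemma exp_neg_abs_integrable_atMost:
  fixes d c :: real
  assumes "0 < d" "c \<le> 0"
  shows "(\<lambda>t. exp (- d * \<bar>t\<bar>)) integrable_on {..c}"
proof -
  have "(\<lambda>t. exp (- d * \<bar>t\<bar>)) absolutely_integrable_on {- c..}"
    using exp_neg_abs_integrable_atLeast[of d "- c"] assms
    by (intro nonnegative_absolutely_integrable_1) auto
  moreover have "uminus ` {..c} \<subseteq> {- c..}" "uminus ` {- c..} \<subseteq> {..c}" by auto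
  ultimately have "(\<lambda>t. exp (- d * \<bar>- t\<bar>)) absolutely_integrable_on {..c}"
    using has_absolute_integral_reflect_real[of "{..c}" "{- c..}" "\<lambda>t. exp (- d * \<bar>t\<bar>)"
        "integral {- c..} (\<lambda>t. exp (- d * \<bar>t\<bar>))"] by simp
  then show ?thesis by (simp add: absolutely_integrable_on_def)
qed

lemma exp_neg_abs_integrable_UNIV:
  fixes d :: real
  assumes "0 < d"
  shows "(\<lambda>t. exp (- d * \<bar>t\<bar>)) integrable_on UNIV"
proof -
  have "{..0::real} \<inter> {0..} = {0}" by auto
  then have "negligible ({..0::real} \<inter> {0..})" by simp
  then show ?thesis
    by (rule integrable_Un'[OF exp_neg_abs_integrable_atMost[OF assms order_refl]
          exp_neg_abs_integrable_atLeast[OF assms order_refl]]) auto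
qed

lemma exp_over_cosh_integrable:
  fixes a :: real
  assumes "\<bar>a\<bar> < 1"
  shows "(\<lambda>t. exp (a * t) / cosh t) integrable_on UNIV"
proof (rule continuous_bounded_by_integrable_imp_integrable)
  show "(\<lambda>t. 2 * exp (- (1 - \<bar>a\<bar>) * \<bar>t\<bar>)) integrable_on UNIV"
    using exp_neg_abs_integrable_UNIV[of "1 - \<bar>a\<bar>"] assms by (intro integrable_on_mult_right) auto
  fix t :: real
  have "exp (a * t) \<le> exp (\<bar>a\<bar> * \<bar>t\<bar>)"
    using abs_ge_self[of "a * t"] by (simp add: abs_mult)
  then have "exp (a * t) / cosh t \<le> exp (\<bar>a\<bar> * \<bar>t\<bar>) / (exp \<bar>t\<bar> / 2)"
    using cosh_ge_exp_abs_div_2[of t] by (intro frac_le) auto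
  also have "\<dots> = 2 * exp (- (1 - \<bar>a\<bar>) * \<bar>t\<bar>)"
    by (simp add: field_simps flip: exp_diff exp_add)
  finally show "norm (exp (a * t) / cosh t) \<le> 2 * exp (- (1 - \<bar>a\<bar>) * \<bar>t\<bar>)" by simp
qed (intro continuous_intros, auto)

lemma integral_Int_symmetric_interval_tendsto:
  fixes f :: "real \<Rightarrow> 'a::banach"
  assumes "f integrable_on S"
  shows "(\<lambda>n. integral ({- real n..real n} \<inter> S) f) \<longlonglongrightarrow> integral S f"
proof (cases "bounded S")
  case True
  then obtain B where B: "S \<subseteq> {- B..B}"
    using bounded_subset_cbox_symmetric[OF True] by (metis box_real(2))
  obtain n0 :: nat where "B \<le> real n0" using real_arch_simple by blast
  have "{- real n..real n} \<inter> S = S" if "n0 \<le> n" for n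
  proof -
    have "{- B..B} \<subseteq> {- real n..real n}" using \<open>B \<le> real n0\<close> that by auto
    then show ?thesis using B by blast
  qed
  then show ?thesis
    by (intro tendsto_eventually eventually_sequentiallyI[of n0]) simp
next
  case False
  then have not_cbox: "\<nexists>a b. S = cbox a b" by auto
  show ?thesis
  proof (rule LIMSEQ_I)
    fix r :: real assume "0 < r"
    obtain B where "0 < B" and B: "\<And>a b. ball 0 B \<subseteq> cbox a b \<Longrightarrow>
        \<exists>z. ((\<lambda>x. if x \<in> S then f x else 0) has_integral z) (cbox a b) \<and> norm (z - integral S f) < r"
      using has_integral_altD[OF integrable_integral[OF assms] not_cbox \<open>0 < r\<close>] by blast
    obtain n0 :: nat where "B \<le> real n0" using real_arch_simple by blast
    have "norm (integral ({- real n..real n} \<inter> S) f - integral S f) < r" if "n0 \<le> n" for n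
    proof -
      have "ball 0 B \<subseteq> cbox (- real n) (real n)"
        using \<open>B \<le> real n0\<close> that by (auto simp: ball_eq_greaterThanLessThan)
      then obtain z where z: "((\<lambda>x. if x \<in> S then f x else 0) has_integral z) {- real n..real n}"
          and "norm (z - integral S f) < r"
        using B by (metis box_real(2))
      moreover have "z = integral ({- real n..real n} \<inter> S) f"
        using integral_unique[OF z] by (simp add: integral_restrict_Int Int_commute)
      ultimately show ?thesis by simp
    qed
    then show "\<exists>n0. \<forall>n\<ge>n0. norm (integral ({- real n..real n} \<inter> S) f - integral S f) < r"
      by blast
  qed
qed

section \<open>Contour integrals over horizontal strips\<close>

text \<open>No integrability hypothesis is needed: a non-integrable function has contour integral \<open>0\<close>.\<close>

lemma norm_contour_integral_linepath_le:
  assumes "\<And>x. x \<in> closed_segment a b \<Longrightarrow> cmod (f x) \<le> B"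
  shows "cmod (contour_integral (linepath a b) f) \<le> B * cmod (b - a)"
proof -
  have "0 \<le> B" using assms[of a] norm_ge_zero order_trans by blast
  then show ?thesis
    using assms contour_integral_bound_linepath[of f a b B] not_integrable_contour_integral[of f]
    by (cases "f contour_integrable_on linepath a b") auto
qed

lemma contour_integral_linepath_same_Im:
  assumes "a < b"
  shows "contour_integral (linepath (Complex a c) (Complex b c)) f = integral {a..b} (\<lambda>x. f (Complex x c))"
proof -
  let ?z = "Complex a c" and ?z' = "Complex b c"
  have "contour_integral (linepath ?z ?z') f = (?z' - ?z) * integral {0..1} (\<lambda>x. f (linepath ?z ?z' x))"
    by (simp add: contour_integral_integral)
  also have "?z' - ?z = of_real (b - a)"
    by (simp add: complex_eq_iff)
  also have "integral {0..1} (\<lambda>x. f (linepath ?z ?z' x)) = integral {0..1} (\<lambda>x. f (Complex (linepath a b x) c))"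
    by (rule integral_cong, rule arg_cong[of _ _ f]) (simp add: linepath_def complex_eq_iff algebra_simps)
  also have "\<dots> = integral {0..(b - a) / (b - a)} (\<lambda>x. f (Complex (a + (b - a) * x) c))"
    using \<open>a < b\<close> by (simp add: algebra_simps linepath_def)
  also have "{0..(b - a) / (b - a)} = (\<lambda>x. x / (b - a)) ` {0..b - a}"
    using \<open>a < b\<close> by simp
  also have "integral \<dots> (\<lambda>x. f (Complex (a + (b - a) * x) c)) =
             integral {a - a..b - a} (\<lambda>x. f (Complex (x + a) c)) / of_real (b - a)"
    using \<open>a < b\<close> by (subst integral_stretch_real) (auto simp: scaleR_conv_of_real add_ac)
  also have "\<dots> = integral {a..b} (\<lambda>x. f (Complex x c)) / of_real (b - a)"
    by (subst integral_shift_real_ivl) (rule refl)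
  finally show ?thesis
    using \<open>a < b\<close> by simp
qed

lemma upper_semicircle_points:
  assumes "z \<in> path_image (part_circlepath 0 1 pi 0)"
  shows "cmod z = 1" "0 \<le> Im z"
proof -
  obtain x where x: "x \<in> closed_segment pi 0" "z = cis x"
    using assms unfolding path_image_part_circlepath' by auto
  then have "0 \<le> x" "x \<le> pi"
    using pi_gt_zero by (auto simp: closed_segment_eq_real_ivl)
  then show "cmod z = 1" "0 \<le> Im z"
    using x(2) by (auto intro: sin_ge_zero)
qed

text \<open>The slit strip contains the indented contour and is starlike about \<open>i\<close>, so Cauchy's theorem
  applies to it.\<close>

definition slit_strip :: "real \<Rightarrow> complex set" where
  "slit_strip b = {z. Im z < b} - {z. Re z = 0 \<and> Im z \<le> 0}"

lemma open_slit_strip: "open (slit_strip b)"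
proof -
  have "closed {z. Re z = 0 \<and> Im z \<le> 0}"
    using closed_Int[OF closed_halfspace_Re_eq closed_halfspace_Im_le] by (simp add: Int_def)
  then show ?thesis
    unfolding slit_strip_def by (intro open_Diff open_halfspace_Im_lt)
qed

lemma starlike_slit_strip:
  assumes "1 < b"
  shows "starlike (slit_strip b)"
  unfolding starlike_def
proof (intro bexI ballI subsetI)
  show "\<i> \<in> slit_strip b" using assms by (simp add: slit_strip_def)
  fix x y assume "x \<in> slit_strip b" "y \<in> closed_segment \<i> x"
  then obtain u where u: "0 \<le> u" "u \<le> 1" "y = (1 - u) *\<^sub>R \<i> + u *\<^sub>R x"
    by (auto simp: closed_segment_def)
  have "(1 - u) * 1 + u * Im x < b"
  proof (cases "u = 0")
    case False
    then have "u * Im x < u * b" using \<open>x \<in> slit_strip b\<close> u by (auto simp: slit_strip_def)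
    moreover have "(1 - u) * 1 \<le> (1 - u) * b" using assms u by (intro mult_left_mono) auto
    ultimately show ?thesis by (simp add: algebra_simps)
  qed (use assms in simp)
  moreover have "0 < (1 - u) * 1 + u * Im x" if "u * Re x = 0"
  proof (cases "u = 0")
    case False
    then have "0 < Im x" using that \<open>x \<in> slit_strip b\<close> by (auto simp: slit_strip_def)
    then show ?thesis using u False by (intro add_nonneg_pos) auto
  qed simp
  ultimately show "y \<in> slit_strip b" by (auto simp: slit_strip_def u(3))
qed

lemma closed_segment_subset_slit_strip:
  assumes "Im u < b" "Im v < b"
    and "Re u < 0 \<and> Re v < 0 \<or> 0 < Re u \<and> 0 < Re v \<or> 0 < Im u \<and> 0 < Im v"
  shows "closed_segment u v \<subseteq> slit_strip b"
proof -
  have "convex {z. Re z < 0 \<and> Im z < b}" "convex {z. 0 < Re z \<and> Im z < b}"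
    "convex {z. 0 < Im z \<and> Im z < b}"
    using convex_Int[OF convex_halfspace_Re_lt convex_halfspace_Im_lt]
      convex_Int[OF convex_halfspace_Re_gt convex_halfspace_Im_lt]
      convex_Int[OF convex_halfspace_Im_gt convex_halfspace_Im_lt]
    by (simp_all add: Int_def)
  moreover have "{z. Re z < 0 \<and> Im z < b} \<subseteq> slit_strip b" "{z. 0 < Re z \<and> Im z < b} \<subseteq> slit_strip b"
    "{z. 0 < Im z \<and> Im z < b} \<subseteq> slit_strip b"
    by (auto simp: slit_strip_def)
  ultimately show ?thesis
    using assms closed_segment_subset by (smt (verit) mem_Collect_eq subset_trans)
qed

lemma upper_semicircle_subset_slit_strip:
  assumes "1 < b"
  shows "path_image (part_circlepath 0 1 pi 0) \<subseteq> slit_strip b"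
proof
  fix z assume "z \<in> path_image (part_circlepath 0 1 pi 0)"
  then have "cmod z = 1" "0 \<le> Im z" using upper_semicircle_points by auto
  moreover have "Im z \<le> cmod z" using abs_Im_le_cmod[of z] by linarith
  ultimately show "z \<in> slit_strip b" using assms by (auto simp: slit_strip_def cmod_def)
qed

lemma contour_integral_indented_rectangle_eq_0:
  fixes f :: "complex \<Rightarrow> complex"
  assumes holo: "f holomorphic_on slit_strip b" and "0 < c" "c < b" "1 < b" "1 < T"
  shows "contour_integral (linepath (complex_of_real (- T)) (- 1)) f + contour_integral (part_circlepath 0 1 pi 0) f
           + contour_integral (linepath 1 (complex_of_real T)) f
           + contour_integral (linepath (Complex T 0) (Complex T c)) f
           + contour_integral (linepath (Complex T c) (Complex (- T) c)) f
           + contour_integral (linepath (Complex (- T) c) (Complex (- T) 0)) f = 0"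
proof -
  define p1 where "p1 = linepath (complex_of_real (- T)) (- 1)"
  define p2 where "p2 = part_circlepath 0 1 pi 0"
  define p3 where "p3 = linepath 1 (complex_of_real T)"
  define p4 where "p4 = linepath (Complex T 0) (Complex T c)"
  define p5 where "p5 = linepath (Complex T c) (Complex (- T) c)"
  define p6 where "p6 = linepath (Complex (- T) c) (Complex (- T) 0)"
  have "path_image p2 \<subseteq> slit_strip b"
    unfolding p2_def using \<open>1 < b\<close> by (rule upper_semicircle_subset_slit_strip)
  moreover have "path_image p1 \<subseteq> slit_strip b" "path_image p3 \<subseteq> slit_strip b"
    "path_image p4 \<subseteq> slit_strip b" "path_image p5 \<subseteq> slit_strip b" "path_image p6 \<subseteq> slit_strip b"
    unfolding p1_def p3_def p4_def p5_def p6_def path_image_linepath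
    using assms by (intro closed_segment_subset_slit_strip; simp)+
  ultimately have images: "path_image p1 \<subseteq> slit_strip b" "path_image p2 \<subseteq> slit_strip b"
    "path_image p3 \<subseteq> slit_strip b" "path_image p4 \<subseteq> slit_strip b"
    "path_image p5 \<subseteq> slit_strip b" "path_image p6 \<subseteq> slit_strip b"
    by blast+
  have valid: "valid_path p1" "valid_path p2" "valid_path p3" "valid_path p4" "valid_path p5" "valid_path p6"
    by (simp_all add: p1_def p2_def p3_def p4_def p5_def p6_def)
  have ends: "pathfinish p1 = pathstart p2" "pathfinish p2 = pathstart p3" "pathfinish p3 = pathstart p4"
    "pathfinish p4 = pathstart p5" "pathfinish p5 = pathstart p6" "pathfinish p6 = pathstart p1"
    by (simp_all add: p1_def p2_def p3_def p4_def p5_def p6_def complex_eq_iff)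
  have integrable: "f contour_integrable_on p" if "valid_path p" "path_image p \<subseteq> slit_strip b" for p
    using contour_integrable_holomorphic_simple[OF holo open_slit_strip that] .
  let ?g = "p1 +++ p2 +++ p3 +++ p4 +++ p5 +++ p6"
  have "(f has_contour_integral 0) ?g"
    using ends valid images
    by (intro Cauchy_theorem_starlike_simple[OF open_slit_strip starlike_slit_strip[OF \<open>1 < b\<close>] holo])
       (auto simp: path_image_join)
  then have "contour_integral ?g f = 0" by (simp add: contour_integral_unique)
  moreover have "contour_integral ?g f = contour_integral p1 f + contour_integral p2 f + contour_integral p3 f
                  + contour_integral p4 f + contour_integral p5 f + contour_integral p6 f"
    using ends valid images
    by (simp add: contour_integral_join integrable path_image_join add_ac)
  ultimately show ?thesis
    by (simp add: p1_def p2_def p3_def p4_def p5_def p6_def)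
qed

lemma contour_integral_indented_rectangle:
  fixes f :: "complex \<Rightarrow> complex"
  assumes holo: "f holomorphic_on slit_strip b" and "0 < c" "c < b" "1 < b" "1 < T"
  shows "integral {- T..- 1} (\<lambda>t. f (of_real t)) + contour_integral (part_circlepath 0 1 pi 0) f
           + integral {1..T} (\<lambda>t. f (of_real t))
         = integral {- T..T} (\<lambda>t. f (Complex t c))
           - contour_integral (linepath (Complex T 0) (Complex T c)) f
           - contour_integral (linepath (Complex (- T) c) (Complex (- T) 0)) f"
proof -
  have "contour_integral (linepath (complex_of_real (- T)) (- 1)) f = integral {- T..- 1} (\<lambda>t. f (of_real t))"
    "contour_integral (linepath 1 (complex_of_real T)) f = integral {1..T} (\<lambda>t. f (of_real t))"
    using \<open>1 < T\<close> by (simp_all add: contour_integral_linepath_Reals_eq)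
  moreover have "contour_integral (linepath (Complex T c) (Complex (- T) c)) f = - integral {- T..T} (\<lambda>t. f (Complex t c))"
  proof -
    have "closed_segment (Complex T c) (Complex (- T) c) \<subseteq> slit_strip b"
      using assms by (intro closed_segment_subset_slit_strip) auto
    then have "continuous_on (closed_segment (Complex T c) (Complex (- T) c)) f"
      using holomorphic_on_imp_continuous_on[OF holo] by (rule continuous_on_subset[rotated])
    then show ?thesis
      using \<open>1 < T\<close> by (simp add: contour_integral_reverse_linepath contour_integral_linepath_same_Im)
  qed
  ultimately show ?thesis
    using contour_integral_indented_rectangle_eq_0[OF assms] by (simp add: algebra_simps)
qed

lemma contour_integral_rectpath_horizontal:
  fixes f :: "complex \<Rightarrow> complex"
  assumes "continuous_on (path_image (rectpath (Complex (- T) c1) (Complex T c2))) f" "0 < T"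
  shows "contour_integral (rectpath (Complex (- T) c1) (Complex T c2)) f
           = integral {- T..T} (\<lambda>t. f (Complex t c1)) + contour_integral (linepath (Complex T c1) (Complex T c2)) f
             - integral {- T..T} (\<lambda>t. f (Complex t c2))
             + contour_integral (linepath (Complex (- T) c2) (Complex (- T) c1)) f"
proof -
  define z1 z2 z3 z4 where "z1 = Complex (- T) c1" and "z2 = Complex T c1"
    and "z3 = Complex T c2" and "z4 = Complex (- T) c2"
  have rect: "rectpath z1 z3 = linepath z1 z2 +++ linepath z2 z3 +++ linepath z3 z4 +++ linepath z4 z1"
    by (simp add: rectpath_def z1_def z2_def z3_def z4_def Let_def)
  have "continuous_on (closed_segment z1 z2) f" "continuous_on (closed_segment z2 z3) f"
    "continuous_on (closed_segment z3 z4) f" "continuous_on (closed_segment z4 z1) f"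
    using assms(1) unfolding z1_def z3_def[symmetric] rect[unfolded z1_def]
    by (auto simp: path_image_join z1_def intro: continuous_on_subset)
  then have "contour_integral (rectpath z1 z3) f = contour_integral (linepath z1 z2) f
      + contour_integral (linepath z2 z3) f + contour_integral (linepath z3 z4) f
      + contour_integral (linepath z4 z1) f"
    unfolding rect by (simp add: contour_integrable_continuous_linepath contour_integrable_joinI valid_path_join)
  moreover have "contour_integral (linepath z1 z2) f = integral {- T..T} (\<lambda>t. f (Complex t c1))"
    unfolding z1_def z2_def using \<open>0 < T\<close> by (simp add: contour_integral_linepath_same_Im)
  moreover have "contour_integral (linepath z3 z4) f = - integral {- T..T} (\<lambda>t. f (Complex t c2))"
    using \<open>continuous_on (closed_segment z3 z4) f\<close> \<open>0 < T\<close> unfolding z3_def z4_def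
    by (simp add: contour_integral_reverse_linepath contour_integral_linepath_same_Im)
  ultimately show ?thesis
    by (simp add: z1_def z2_def z3_def z4_def)
qed

lemma contour_integral_rectangle_eq_residues:
  fixes f :: "complex \<Rightarrow> complex"
  assumes holo: "f holomorphic_on {z. a < Im z \<and> Im z < b} - P" and "finite P"
    and "a < c1" "c1 < c2" "c2 < b" "0 < T"
    and P: "\<And>p. p \<in> P \<Longrightarrow> c1 < Im p \<and> Im p < c2 \<and> \<bar>Re p\<bar> < T"
  shows "integral {- T..T} (\<lambda>t. f (Complex t c1)) + contour_integral (linepath (Complex T c1) (Complex T c2)) f
           - integral {- T..T} (\<lambda>t. f (Complex t c2))
           + contour_integral (linepath (Complex (- T) c2) (Complex (- T) c1)) f
         = 2 * pi * \<i> * (\<Sum>p\<in>P. residue f p)"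
proof -
  define S where "S = {z. a < Im z \<and> Im z < b}"
  let ?g = "rectpath (Complex (- T) c1) (Complex T c2)"
  have "open S" "convex S"
    unfolding S_def using convex_Int[OF convex_halfspace_Im_gt[of a] convex_halfspace_Im_lt[of b]]
    by (simp_all add: open_Collect_conj open_halfspace_Im_gt open_halfspace_Im_lt Int_def)
  have "f holomorphic_on S - P" using holo by (simp add: S_def)
  have image: "path_image ?g \<subseteq> S - P"
  proof
    fix z assume "z \<in> path_image ?g"
    then have "Re z \<in> {- T, T} \<and> Im z \<in> {c1..c2} \<or> Im z \<in> {c1, c2} \<and> Re z \<in> {- T..T}"
      using \<open>0 < T\<close> \<open>c1 < c2\<close> by (auto simp: path_image_rectpath)
    then show "z \<in> S - P"
      using P[of z] assms(3-5) by (auto simp: S_def)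
  qed
  have "contour_integral ?g f = 2 * pi * \<i> * (\<Sum>p\<in>P. winding_number ?g p * residue f p)"
  proof (rule Residue_theorem[OF \<open>open S\<close> convex_connected[OF \<open>convex S\<close>] \<open>finite P\<close>
        \<open>f holomorphic_on S - P\<close> _ _ image])
    show "\<forall>z. z \<notin> S \<longrightarrow> winding_number ?g z = 0"
      using image by (auto intro!: winding_number_zero_outside[OF _ \<open>convex S\<close>])
  qed auto
  also have "(\<Sum>p\<in>P. winding_number ?g p * residue f p) = (\<Sum>p\<in>P. residue f p)"
  proof (rule sum.cong)
    fix p assume "p \<in> P"
    then have "p \<in> box (Complex (- T) c1) (Complex T c2)"
      using P[of p] by (auto simp: in_box_complex_iff)
    then show "winding_number ?g p * residue f p = residue f p"
      by (simp add: winding_number_rectpath)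
  qed simp
  finally show ?thesis
    using image holomorphic_on_imp_continuous_on[OF \<open>f holomorphic_on S - P\<close>] \<open>0 < T\<close>
    by (simp add: contour_integral_rectpath_horizontal continuous_on_subset)
qed

lemma line_integrals_diff_eq_residues:
  fixes f :: "complex \<Rightarrow> complex"
  assumes holo: "f holomorphic_on {z. a < Im z \<and> Im z < b} - P" and "finite P"
    and "a < c1" "c1 < c2" "c2 < b"
    and P: "\<And>p. p \<in> P \<Longrightarrow> c1 < Im p \<and> Im p < c2"
    and integrable: "(\<lambda>t. f (Complex t c1)) integrable_on UNIV" "(\<lambda>t. f (Complex t c2)) integrable_on UNIV"
    and right: "(\<lambda>n. contour_integral (linepath (Complex (real n) c1) (Complex (real n) c2)) f) \<longlonglongrightarrow> 0"
    and left: "(\<lambda>n. contour_integral (linepath (Complex (- real n) c2) (Complex (- real n) c1)) f) \<longlonglongrightarrow> 0"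
  shows "integral UNIV (\<lambda>t. f (Complex t c1)) - integral UNIV (\<lambda>t. f (Complex t c2))
           = 2 * pi * \<i> * (\<Sum>p\<in>P. residue f p)"
proof -
  obtain B where B: "\<And>p. p \<in> P \<Longrightarrow> cmod p \<le> B"
    using finite_imp_bounded[OF \<open>finite P\<close>] by (auto simp: bounded_iff)
  obtain n0 :: nat where "max B 0 < real n0" using reals_Archimedean2 by blast
  have "integral {- real n..real n} (\<lambda>t. f (Complex t c1))
        + contour_integral (linepath (Complex (real n) c1) (Complex (real n) c2)) f
        - integral {- real n..real n} (\<lambda>t. f (Complex t c2))
        + contour_integral (linepath (Complex (- real n) c2) (Complex (- real n) c1)) f
      = 2 * pi * \<i> * (\<Sum>p\<in>P. residue f p)" if "n0 \<le> n" for n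
  proof (rule contour_integral_rectangle_eq_residues[OF holo \<open>finite P\<close> assms(3-5)])
    show "0 < real n" using \<open>max B 0 < real n0\<close> that by linarith
    fix p assume "p \<in> P"
    then have "\<bar>Re p\<bar> < real n"
      using abs_Re_le_cmod[of p] B[of p] \<open>max B 0 < real n0\<close> that by linarith
    then show "c1 < Im p \<and> Im p < c2 \<and> \<bar>Re p\<bar> < real n" using P[OF \<open>p \<in> P\<close>] by blast
  qed
  then have eq: "\<forall>\<^sub>F n in sequentially.
      integral {- real n..real n} (\<lambda>t. f (Complex t c1))
        + contour_integral (linepath (Complex (real n) c1) (Complex (real n) c2)) f
        - integral {- real n..real n} (\<lambda>t. f (Complex t c2))
        + contour_integral (linepath (Complex (- real n) c2) (Complex (- real n) c1)) f
      = 2 * pi * \<i> * (\<Sum>p\<in>P. residue f p)"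
    by (rule eventually_sequentiallyI)
  have lim: "(\<lambda>n. integral {- real n..real n} (\<lambda>t. f (Complex t c1))
        + contour_integral (linepath (Complex (real n) c1) (Complex (real n) c2)) f
        - integral {- real n..real n} (\<lambda>t. f (Complex t c2))
        + contour_integral (linepath (Complex (- real n) c2) (Complex (- real n) c1)) f)
      \<longlonglongrightarrow> integral UNIV (\<lambda>t. f (Complex t c1)) + 0 - integral UNIV (\<lambda>t. f (Complex t c2)) + 0"
    using integral_Int_symmetric_interval_tendsto[OF integrable(1)]
      integral_Int_symmetric_interval_tendsto[OF integrable(2)]
    by (intro tendsto_intros right left) simp_all
  have "(\<lambda>n. 2 * pi * \<i> * (\<Sum>p\<in>P. residue f p))
      \<longlonglongrightarrow> integral UNIV (\<lambda>t. f (Complex t c1)) + 0 - integral UNIV (\<lambda>t. f (Complex t c2)) + 0"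
    by (rule Lim_transform_eventually[OF lim eq])
  then show ?thesis
    using LIMSEQ_unique[OF tendsto_const] by fastforce
qed

section \<open>The kernel \<open>exp (w x) / (x sinh x)\<close>\<close>

definition csch_kernel :: "complex \<Rightarrow> complex \<Rightarrow> complex" where
  "csch_kernel w x = exp (w * x) / (x * sinh x)"

lemma holomorphic_csch_kernel:
  assumes "\<And>x. x \<in> S \<Longrightarrow> x \<noteq> 0 \<and> sinh x \<noteq> 0"
  shows "csch_kernel w holomorphic_on S"
  unfolding csch_kernel_def using assms by (auto intro!: holomorphic_intros)

lemma holomorphic_csch_kernel_slit_strip: "csch_kernel w holomorphic_on slit_strip pi"
proof (rule holomorphic_csch_kernel)
  fix x assume x: "x \<in> slit_strip pi"
  have "sinh x \<noteq> 0"
  proof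
    assume "sinh x = 0"
    then obtain k :: int where "x = \<i> * (of_int k * pi)" by (auto simp: sinh_complex_eq_0_iff)
    with x have "real_of_int k * pi < 1 * pi" "0 < real_of_int k * pi" by (auto simp: slit_strip_def)
    then show False by (auto simp: mult_less_cancel_right zero_less_mult_iff)
  qed
  then show "x \<noteq> 0 \<and> sinh x \<noteq> 0" by auto
qed

lemma norm_csch_kernel_le:
  assumes "1 \<le> \<bar>Re x\<bar>" "\<bar>Im x\<bar> \<le> Y"
  shows "cmod (csch_kernel w x) \<le> 4 * exp (\<bar>Im w\<bar> * Y) * exp ((\<bar>Re w\<bar> - 1) * \<bar>Re x\<bar>)"
proof -
  have "Re w * Re x - Im w * Im x \<le> \<bar>Re w\<bar> * \<bar>Re x\<bar> + \<bar>Im w\<bar> * \<bar>Im x\<bar>"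
    by (metis abs_ge_self abs_ge_minus_self abs_mult add_mono diff_conv_add_uminus)
  also have "\<dots> \<le> \<bar>Re w\<bar> * \<bar>Re x\<bar> + \<bar>Im w\<bar> * Y"
    using assms(2) by (intro add_left_mono mult_left_mono) auto
  finally have numerator: "cmod (exp (w * x)) \<le> exp (\<bar>Re w\<bar> * \<bar>Re x\<bar> + \<bar>Im w\<bar> * Y)"
    by simp
  have "1 \<le> cmod x" using abs_Re_le_cmod[of x] assms(1) by linarith
  moreover have "exp \<bar>Re x\<bar> / 4 \<le> cmod (sinh x)"
    using abs_sinh_Re_le_norm_sinh[of x] sinh_ge_exp_div_4[OF assms(1)] by simp
  ultimately have "cmod (csch_kernel w x) \<le> exp (\<bar>Re w\<bar> * \<bar>Re x\<bar> + \<bar>Im w\<bar> * Y) / (1 * (exp \<bar>Re x\<bar> / 4))"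
    unfolding csch_kernel_def norm_divide norm_mult using numerator by (intro frac_le mult_mono) auto
  also have "\<dots> = 4 * exp (\<bar>Im w\<bar> * Y) * exp ((\<bar>Re w\<bar> - 1) * \<bar>Re x\<bar>)"
    by (simp add: field_simps flip: exp_add exp_diff)
  finally show ?thesis .
qed

text \<open>Heights halfway between the poles \<open>i pi m\<close> of the kernel, where \<open>|sinh (t + i c)| = cosh t\<close>.\<close>

definition mid_height :: "int \<Rightarrow> real" where
  "mid_height m = pi * (of_int m + 1/2)"

lemma abs_mid_height_ge: "pi / 2 \<le> \<bar>mid_height m\<bar>"
proof -
  have "1/2 \<le> \<bar>real_of_int m + 1/2\<bar>"
    by (cases "0 \<le> m") (auto simp: abs_if)
  then have "pi * (1/2) \<le> pi * \<bar>real_of_int m + 1/2\<bar>" by (intro mult_left_mono) auto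
  then show ?thesis by (simp add: mid_height_def abs_mult)
qed

lemma norm_sinh_mid_height: "cmod (sinh (Complex t (mid_height m))) = cosh t"
proof -
  have "cos (mid_height m) = 0"
    by (simp add: mid_height_def distrib_left cos_add sin_zero_iff_int2 mult.commute)
  then have "(sin (mid_height m))\<^sup>2 = 1"
    using sin_cos_squared_add[of "mid_height m"] by simp
  then have "(cmod (sinh (Complex t (mid_height m))))\<^sup>2 = (cosh t)\<^sup>2"
    by (simp add: norm_sinh_complex_squared cosh_square_eq)
  then show ?thesis
    by (metis cosh_real_nonneg norm_ge_zero power2_eq_iff_nonneg)
qed

lemma norm_csch_kernel_mid_height_le:
  "cmod (csch_kernel w (Complex t (mid_height m)))
     \<le> exp (- Im w * mid_height m) / \<bar>mid_height m\<bar> * (exp (Re w * t) / cosh t)"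
proof -
  let ?x = "Complex t (mid_height m)"
  have "\<bar>mid_height m\<bar> \<le> cmod ?x" using abs_Im_le_cmod[of ?x] by simp
  moreover have "0 < \<bar>mid_height m\<bar>" using abs_mid_height_ge[of m] pi_gt_zero by linarith
  moreover have "cmod (csch_kernel w ?x) = exp (Re w * t - Im w * mid_height m) / (cmod ?x * cosh t)"
    by (simp add: csch_kernel_def norm_divide norm_mult norm_sinh_mid_height)
  ultimately have "cmod (csch_kernel w ?x) \<le> exp (Re w * t - Im w * mid_height m) / (\<bar>mid_height m\<bar> * cosh t)"
    by (auto intro!: divide_left_mono mult_right_mono mult_pos_pos)
  also have "\<dots> = exp (- Im w * mid_height m) / \<bar>mid_height m\<bar> * (exp (Re w * t) / cosh t)"
    by (simp add: exp_diff field_simps flip: exp_add)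
  finally show ?thesis .
qed

definition csch_line_integral :: "complex \<Rightarrow> real \<Rightarrow> complex" where
  "csch_line_integral w c = integral UNIV (\<lambda>t. csch_kernel w (Complex t c))"

lemma csch_kernel_mid_height_integrable:
  assumes "\<bar>Re w\<bar> < 1"
  shows "(\<lambda>t. csch_kernel w (Complex t (mid_height m))) integrable_on UNIV"
proof (rule continuous_bounded_by_integrable_imp_integrable)
  have "mid_height m \<noteq> 0" using abs_mid_height_ge[of m] pi_gt_zero by fastforce
  moreover have "sinh (Complex t (mid_height m)) \<noteq> 0" for t
    using norm_sinh_mid_height[of t m] cosh_real_pos[of t] by auto
  ultimately have "Complex t (mid_height m) \<noteq> 0 \<and> sinh (Complex t (mid_height m)) \<noteq> 0" for t
    by (auto simp: complex_eq_iff)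
  then show "continuous_on UNIV (\<lambda>t. csch_kernel w (Complex t (mid_height m)))"
    unfolding csch_kernel_def Complex_eq by (intro continuous_intros) auto
  show "(\<lambda>t. exp (- Im w * mid_height m) / \<bar>mid_height m\<bar> * (exp (Re w * t) / cosh t)) integrable_on UNIV"
    using exp_over_cosh_integrable assms by (intro integrable_on_mult_right) auto
  show "norm (csch_kernel w (Complex t (mid_height m)))
          \<le> exp (- Im w * mid_height m) / \<bar>mid_height m\<bar> * (exp (Re w * t) / cosh t)" for t
    by (rule norm_csch_kernel_mid_height_le)
qed auto

lemma norm_csch_line_integral_mid_height_le:
  assumes "\<bar>Re w\<bar> < 1"
  shows "cmod (csch_line_integral w (mid_height m))
           \<le> exp (- Im w * mid_height m) / \<bar>mid_height m\<bar> * integral UNIV (\<lambda>t. exp (Re w * t) / cosh t)"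
  unfolding csch_line_integral_def integral_mult_right[symmetric]
  using assms by (intro integral_norm_bound_integral csch_kernel_mid_height_integrable
      norm_csch_kernel_mid_height_le integrable_on_mult_right exp_over_cosh_integrable)

lemma csch_line_integral_mid_height_tendsto_0:
  assumes "\<bar>Re w\<bar> < 1" and "\<forall>\<^sub>F n in sequentially. 0 \<le> Im w * mid_height (m n)"
    and "filterlim (\<lambda>n. \<bar>mid_height (m n)\<bar>) at_top sequentially"
  shows "(\<lambda>n. csch_line_integral w (mid_height (m n))) \<longlonglongrightarrow> 0"
proof (rule Lim_null_comparison)
  let ?K = "integral UNIV (\<lambda>t. exp (Re w * t) / cosh t)"
  show "(\<lambda>n. ?K / \<bar>mid_height (m n)\<bar>) \<longlonglongrightarrow> 0"
    using assms(3) by (intro tendsto_divide_0[OF tendsto_const] filterlim_at_top_imp_at_infinity)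
  have "0 \<le> ?K"
    using assms(1) by (intro integral_nonneg exp_over_cosh_integrable) auto
  have "cmod (csch_line_integral w (mid_height (m n))) \<le> ?K / \<bar>mid_height (m n)\<bar>"
    if "0 \<le> Im w * mid_height (m n)" for n
  proof -
    have "exp (- Im w * mid_height (m n)) * ?K \<le> ?K"
      using that \<open>0 \<le> ?K\<close> by (intro mult_left_le_one_le) auto
    then have "exp (- Im w * mid_height (m n)) / \<bar>mid_height (m n)\<bar> * ?K \<le> ?K / \<bar>mid_height (m n)\<bar>"
      by (simp add: divide_right_mono)
    then show ?thesis
      by (rule order_trans[OF norm_csch_line_integral_mid_height_le[OF assms(1)]])
  qed
  then show "\<forall>\<^sub>F n in sequentially. cmod (csch_line_integral w (mid_height (m n))) \<le> ?K / \<bar>mid_height (m n)\<bar>"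
    using assms(2) by (rule eventually_mono[rotated])
qed

lemma csch_kernel_vertical_integral_tendsto_0:
  assumes "\<bar>Re w\<bar> < 1" "\<bar>s\<bar> = 1"
  shows "(\<lambda>n. contour_integral (linepath (Complex (s * real n) a) (Complex (s * real n) b)) (csch_kernel w))
           \<longlonglongrightarrow> 0"
proof (rule Lim_null_comparison)
  define C where "C n = 4 * exp (\<bar>Im w\<bar> * max \<bar>a\<bar> \<bar>b\<bar>) * exp ((\<bar>Re w\<bar> - 1) * real n)" for n
  have "(\<lambda>n. exp (\<bar>Re w\<bar> - 1) ^ n) \<longlonglongrightarrow> 0"
    using assms(1) by (intro LIMSEQ_power_zero) auto
  then have "(\<lambda>n. exp ((\<bar>Re w\<bar> - 1) * real n)) \<longlonglongrightarrow> 0"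
    by (simp add: mult.commute flip: exp_of_nat_mult)
  then have "(\<lambda>n. C n * \<bar>b - a\<bar>) \<longlonglongrightarrow> 4 * exp (\<bar>Im w\<bar> * max \<bar>a\<bar> \<bar>b\<bar>) * 0 * \<bar>b - a\<bar>"
    unfolding C_def by (intro tendsto_intros)
  then show "(\<lambda>n. C n * \<bar>b - a\<bar>) \<longlonglongrightarrow> 0" by simp
  show "\<forall>\<^sub>F n in sequentially. cmod (contour_integral (linepath (Complex (s * real n) a) (Complex (s * real n) b)) (csch_kernel w)) \<le> C n * \<bar>b - a\<bar>"
  proof (rule eventually_sequentiallyI[of 1])
    fix n :: nat assume "1 \<le> n"
    have "cmod (contour_integral (linepath (Complex (s * real n) a) (Complex (s * real n) b)) (csch_kernel w))
        \<le> C n * cmod (Complex (s * real n) b - Complex (s * real n) a)"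
    proof (rule norm_contour_integral_linepath_le)
      fix x assume "x \<in> closed_segment (Complex (s * real n) a) (Complex (s * real n) b)"
      then have Re_x: "Re x = s * real n" and Im_x: "Im x \<in> closed_segment a b"
        by (auto simp: closed_segment_same_Re)
      have Re_x: "\<bar>Re x\<bar> = real n"
        using assms(2) by (simp add: Re_x abs_mult)
      have "\<bar>Im x\<bar> \<le> max \<bar>a\<bar> \<bar>b\<bar>"
        using Im_x unfolding closed_segment_eq_real_ivl by (cases "a \<le> b") auto
      moreover have "1 \<le> \<bar>Re x\<bar>" using Re_x \<open>1 \<le> n\<close> by simp
      ultimately show "cmod (csch_kernel w x) \<le> C n"
        using norm_csch_kernel_le[of x "max \<bar>a\<bar> \<bar>b\<bar>" w] unfolding C_def Re_x by blast
    qed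
    also have "cmod (Complex (s * real n) b - Complex (s * real n) a) = \<bar>b - a\<bar>"
      by (simp add: cmod_def)
    finally show "cmod (contour_integral (linepath (Complex (s * real n) a) (Complex (s * real n) b)) (csch_kernel w)) \<le> C n * \<bar>b - a\<bar>" .
  qed
qed

section \<open>The indented line\<close>

text \<open>The contour \<open>R\<close> of the paper: the real axis, with the pole at \<open>0\<close> bypassed along the upper
  unit semicircle.\<close>

definition indented_line :: "complex set" where
  "indented_line = complex_of_real ` {t. 1 \<le> \<bar>t\<bar>} \<union> path_image (part_circlepath 0 1 pi 0)"

definition indented_line_integrable :: "(complex \<Rightarrow> complex) \<Rightarrow> bool" where
  "indented_line_integrable f \<longleftrightarrow>
     (\<lambda>x. f (of_real x)) integrable_on {..- 1} \<and> f contour_integrable_on part_circlepath 0 1 pi 0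
     \<and> (\<lambda>x. f (of_real x)) integrable_on {1..}"

definition indented_line_integral :: "(complex \<Rightarrow> complex) \<Rightarrow> complex" where
  "indented_line_integral f =
     integral {..- 1} (\<lambda>x. f (of_real x)) + contour_integral (part_circlepath 0 1 pi 0) f
     + integral {1..} (\<lambda>x. f (of_real x))"

lemma indented_line_cases:
  assumes "z \<in> indented_line"
  obtains "Im z = 0" "1 \<le> \<bar>Re z\<bar>" | "cmod z = 1"
  using assms upper_semicircle_points(1) by (auto simp: indented_line_def)

lemma indented_line_integrableI:
  assumes "continuous_on indented_line f" "0 < d"
    and bound: "\<And>t. 1 \<le> \<bar>t\<bar> \<Longrightarrow> cmod (f (of_real t)) \<le> C * exp (- d * \<bar>t\<bar>)"
  shows "indented_line_integrable f"
proof -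
  have "(\<lambda>x. f (of_real x)) integrable_on S" if S: "S = {..- 1} \<or> S = {1..}" for S
  proof (rule continuous_bounded_by_integrable_imp_integrable)
    have "complex_of_real ` S \<subseteq> indented_line"
      using S by (auto simp: indented_line_def)
    then show "continuous_on S (\<lambda>x. f (of_real x))"
      by (intro continuous_on_compose2[OF assms(1)] continuous_intros)
    show "S \<in> sets lebesgue" using S by auto
    show "(\<lambda>t. C * exp (- d * \<bar>t\<bar>)) integrable_on S"
      using S exp_neg_abs_integrable_atMost[OF \<open>0 < d\<close>, of "- 1"]
        exp_neg_abs_integrable_atLeast[OF \<open>0 < d\<close>, of 1]
      by (auto intro: integrable_on_mult_right)
    show "norm (f (of_real t)) \<le> C * exp (- d * \<bar>t\<bar>)" if "t \<in> S" for t
      using S that by (intro bound) auto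
  qed
  moreover have "f contour_integrable_on part_circlepath 0 1 pi 0"
    by (rule contour_integrable_continuous_part_circlepath)
       (auto intro: continuous_on_subset[OF assms(1)] simp: indented_line_def)
  ultimately show ?thesis
    unfolding indented_line_integrable_def by blast
qed

lemma indented_line_integral_diff:
  assumes "indented_line_integrable f" "indented_line_integrable g"
  shows "indented_line_integral (\<lambda>x. f x - g x) = indented_line_integral f - indented_line_integral g"
  using assms unfolding indented_line_integrable_def indented_line_integral_def
  by (simp add: integral_diff contour_integral_diff)

lemma indented_line_integral_mult:
  assumes "indented_line_integrable f"
  shows "indented_line_integral (\<lambda>x. c * f x) = c * indented_line_integral f"
  using assms unfolding indented_line_integrable_def indented_line_integral_def
  by (simp add: contour_integral_lmul distrib_left)

lemma indented_line_integral_cong: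
  assumes "\<And>z. z \<in> indented_line \<Longrightarrow> f z = g z"
  shows "indented_line_integral f = indented_line_integral g"
proof -
  have "integral S (\<lambda>x. f (of_real x)) = integral S (\<lambda>x. g (of_real x))" if "S = {..- 1} \<or> S = {1..}" for S
    using that assms by (intro integral_cong) (auto simp: indented_line_def)
  moreover have "contour_integral (part_circlepath 0 1 pi 0) f = contour_integral (part_circlepath 0 1 pi 0) g"
    using assms by (intro contour_integral_eq) (auto simp: indented_line_def)
  ultimately show ?thesis
    unfolding indented_line_integral_def by metis
qed

lemma indented_line_csch_kernel_nonsingular:
  assumes "z \<in> indented_line"
  shows "z \<noteq> 0 \<and> sinh z \<noteq> 0"
  using assms
proof (cases rule: indented_line_cases)
  case 1
  then have "Re z \<noteq> 0" by auto
  then show ?thesis using sinh_nonzero_if_Re_nonzero by auto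
next
  case 2
  then have "z \<noteq> 0" "cmod z < pi" using pi_gt3 by auto
  then show ?thesis using sinh_nonzero_if_norm_less_pi by blast
qed

lemma csch_kernel_indented_line_integrable:
  assumes "\<bar>Re w\<bar> < 1"
  shows "indented_line_integrable (csch_kernel w)"
proof (rule indented_line_integrableI)
  show "continuous_on indented_line (csch_kernel w)"
    using indented_line_csch_kernel_nonsingular
    by (intro holomorphic_on_imp_continuous_on holomorphic_csch_kernel) blast
  show "0 < 1 - \<bar>Re w\<bar>" using assms by simp
  show "cmod (csch_kernel w (of_real t)) \<le> 4 * exp (- (1 - \<bar>Re w\<bar>) * \<bar>t\<bar>)" if "1 \<le> \<bar>t\<bar>" for t
    using norm_csch_kernel_le[of "of_real t" 0 w] that by simp
qed

lemma indented_line_integral_csch_kernel: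
  assumes "\<bar>Re w\<bar> < 1"
  shows "indented_line_integral (csch_kernel w) = csch_line_integral w (mid_height 0)"
proof -
  let ?f = "csch_kernel w" and ?c = "mid_height 0"
  have c: "?c = pi / 2" by (simp add: mid_height_def)
  have eq: "\<forall>\<^sub>F n in sequentially.
      integral {- real n..- 1} (\<lambda>t. ?f (of_real t)) + contour_integral (part_circlepath 0 1 pi 0) ?f
        + integral {1..real n} (\<lambda>t. ?f (of_real t))
      = integral {- real n..real n} (\<lambda>t. ?f (Complex t ?c))
        - contour_integral (linepath (Complex (1 * real n) 0) (Complex (1 * real n) ?c)) ?f
        - contour_integral (linepath (Complex (- 1 * real n) ?c) (Complex (- 1 * real n) 0)) ?f"
    unfolding c using pi_gt3 holomorphic_csch_kernel_slit_strip[of w]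
    by (intro eventually_sequentiallyI[of 2]) (simp add: contour_integral_indented_rectangle)
  have rays: "(\<lambda>x. ?f (of_real x)) integrable_on {..- 1}" "(\<lambda>x. ?f (of_real x)) integrable_on {1..}"
    using csch_kernel_indented_line_integrable[OF assms] by (simp_all add: indented_line_integrable_def)
  have "{- real n..real n} \<inter> {..- 1} = {- real n..- 1}" "{- real n..real n} \<inter> {1..} = {1..real n}" for n
    by auto
  then have lim: "(\<lambda>n. integral {- real n..- 1} (\<lambda>t. ?f (of_real t)) + contour_integral (part_circlepath 0 1 pi 0) ?f
        + integral {1..real n} (\<lambda>t. ?f (of_real t)))
      \<longlonglongrightarrow> indented_line_integral ?f"
    unfolding indented_line_integral_def
    using integral_Int_symmetric_interval_tendsto[OF rays(1)] integral_Int_symmetric_interval_tendsto[OF rays(2)]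
    by (intro tendsto_intros) simp_all
  have "(\<lambda>n. integral {- real n..real n} (\<lambda>t. ?f (Complex t ?c))
        - contour_integral (linepath (Complex (1 * real n) 0) (Complex (1 * real n) ?c)) ?f
        - contour_integral (linepath (Complex (- 1 * real n) ?c) (Complex (- 1 * real n) 0)) ?f)
      \<longlonglongrightarrow> csch_line_integral w ?c - 0 - 0"
    unfolding csch_line_integral_def
    using integral_Int_symmetric_interval_tendsto[OF csch_kernel_mid_height_integrable[OF assms, of 0]]
    by (intro tendsto_intros csch_kernel_vertical_integral_tendsto_0 assms) simp_all
  then have "(\<lambda>n. integral {- real n..- 1} (\<lambda>t. ?f (of_real t)) + contour_integral (part_circlepath 0 1 pi 0) ?f
        + integral {1..real n} (\<lambda>t. ?f (of_real t)))
      \<longlonglongrightarrow> csch_line_integral w ?c - 0 - 0"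
    by (rule Lim_transform_eventually) (use eq in \<open>simp add: eventually_mono\<close>)
  with lim show ?thesis
    using LIMSEQ_unique by fastforce
qed

section \<open>Shifting the line of integration across the poles\<close>

lemma telescoping_eq_Ln:
  fixes f :: "nat \<Rightarrow> complex"
  assumes "f \<longlonglongrightarrow> 0" "cmod u < 1" and step: "\<And>n. f n - f (Suc n) = 2 * u ^ Suc n / of_nat (Suc n)"
  shows "f 0 = - 2 * Ln (1 - u)"
proof -
  have "(\<lambda>n. - (u ^ n) / of_nat n) sums Ln (1 - u)"
    using Ln_series'[of "- u"] assms(2) by simp
  \<comment> \<open>the term for \<open>n = 0\<close> is \<open>-1 / 0 = 0\<close>\<close>
  then have "(\<lambda>n. - (u ^ Suc n) / of_nat (Suc n)) sums Ln (1 - u)"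
    by (subst sums_Suc_iff) simp
  then have "(\<lambda>n. - 2 * (- (u ^ Suc n) / of_nat (Suc n))) sums (- 2 * Ln (1 - u))"
    by (rule sums_mult)
  moreover have "(\<lambda>n. f n - f (Suc n)) sums f 0"
    using telescope_sums'[OF assms(1)] by simp
  ultimately show ?thesis
    unfolding step by (simp add: sums_unique2)
qed

lemma cosh_i_int_pi: "cosh (\<i> * (of_int m * pi)) = exp (- (\<i> * (of_int m * pi)))"
proof -
  let ?p = "\<i> * (of_int m * pi)"
  have "exp (2 * of_int m * pi * \<i>) = 1" by (rule exp_integer_2pi) simp
  then have "exp ?p * exp ?p = 1" by (simp add: algebra_simps flip: exp_add)
  then have "exp ?p = exp (- ?p)" by (simp add: exp_minus field_simps)
  then show ?thesis by (simp add: cosh_def scaleR_conv_of_real)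
qed

lemma residue_csch_kernel_pole:
  assumes "m \<noteq> 0"
  shows "residue (csch_kernel w) (\<i> * (of_int m * pi)) = exp ((w + 1) * (\<i> * (of_int m * pi))) / (\<i> * (of_int m * pi))"
proof -
  define p where "p = \<i> * (of_int m * pi)"
  have "p \<noteq> 0" using assms by (simp add: p_def)
  have "sinh p = 0" by (auto simp: p_def sinh_complex_eq_0_iff)
  have nonsingular: "x \<noteq> 0 \<and> sinh x \<noteq> 0" if "x \<in> ball p pi - {p}" for x
  proof -
    have "sinh x \<noteq> 0"
    proof
      assume "sinh x = 0"
      then obtain k :: int where k: "x = \<i> * (of_int k * pi)" by (auto simp: sinh_complex_eq_0_iff)
      have "x - p = \<i> * (of_int (k - m) * pi)" by (simp add: k p_def algebra_simps)
      then have "cmod (x - p) = \<bar>real_of_int (k - m)\<bar> * pi" by (simp add: norm_mult del: of_int_diff)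
      moreover have "cmod (x - p) < pi" using that by (simp add: dist_norm norm_minus_commute)
      ultimately have "\<bar>real_of_int (k - m)\<bar> < 1" by simp
      then have "k = m" by linarith
      with that k show False by (simp add: p_def)
    qed
    then show ?thesis by auto
  qed
  have cosh_p: "cosh p = exp (- p)" unfolding p_def by (rule cosh_i_int_pi)
  have "((\<lambda>x. (sinh x - sinh p) / (x - p)) \<longlongrightarrow> cosh p) (at p)"
    using DERIV_ident[THEN has_field_derivative_sinh, of p] by (simp add: has_field_derivative_iff)
  then have "((\<lambda>x. sinh x / (x - p)) \<longlongrightarrow> exp (- p)) (at p)"
    using \<open>sinh p = 0\<close> by (simp add: cosh_p)
  then have "((\<lambda>x. inverse (sinh x / (x - p))) \<longlongrightarrow> inverse (exp (- p))) (at p)"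
    by (rule tendsto_inverse) simp
  moreover have "((\<lambda>x. exp (w * x) / x) \<longlongrightarrow> exp (w * p) / p) (at p)"
    using \<open>p \<noteq> 0\<close> by (intro tendsto_intros) auto
  ultimately have lim: "((\<lambda>x. exp (w * x) / x * inverse (sinh x / (x - p)))
      \<longlongrightarrow> exp (w * p) / p * inverse (exp (- p))) (at p)"
    by (rule tendsto_mult[rotated])
  have "exp (w * p) / p * inverse (exp (- p)) = exp ((w + 1) * p) / p"
    by (simp add: exp_minus distrib_right exp_add)
  moreover have "(\<lambda>x. exp (w * x) / x * inverse (sinh x / (x - p))) = (\<lambda>x. csch_kernel w x * (x - p))"
    by (simp add: fun_eq_iff csch_kernel_def field_simps)
  ultimately have "((\<lambda>x. csch_kernel w x * (x - p)) \<longlongrightarrow> exp ((w + 1) * p) / p) (at p)"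
    using lim by argo
  then have "residue (csch_kernel w) p = exp ((w + 1) * p) / p"
    using nonsingular by (intro residue_simple'[of "ball p pi"] holomorphic_csch_kernel) auto
  then show ?thesis unfolding p_def .
qed

lemma residue_csch_kernel_0: "residue (csch_kernel w) 0 = w"
proof -
  define \<phi> where "\<phi> x = exp (w * x) / sinhc x" for x
  have "\<phi> holomorphic_on ball 0 pi"
    unfolding \<phi>_def using sinhc_nonzero
    by (auto intro!: holomorphic_intros holomorphic_on_subset[OF holomorphic_sinhc])
  have "residue (csch_kernel w) 0 = residue (\<lambda>x. \<phi> x / (x - 0) ^ Suc 1) 0"
  proof (rule residue_cong)
    have "csch_kernel w x = \<phi> x / (x - 0) ^ Suc 1" if "x \<in> ball 0 pi" for x
      using sinhc_nonzero[of x] that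
      by (simp add: csch_kernel_def \<phi>_def sinh_eq_mult_sinhc power2_eq_square field_simps)
    then show "\<forall>\<^sub>F x in at 0. csch_kernel w x = \<phi> x / (x - 0) ^ Suc 1"
      unfolding eventually_at by (intro exI[of _ pi]) (auto simp: dist_norm)
  qed simp
  also have "\<dots> = deriv \<phi> 0"
    using \<open>\<phi> holomorphic_on ball 0 pi\<close> by (subst residue_holomorphic_over_power) auto
  also have "\<dots> = w"
  proof (rule DERIV_imp_deriv)
    have "((\<lambda>x. exp (w * x)) has_field_derivative w * exp (w * 0)) (at 0)"
      by (auto intro!: derivative_eq_intros)
    then show "(\<phi> has_field_derivative w) (at 0)"
      using DERIV_divide[OF _ has_field_derivative_sinhc_0] unfolding \<phi>_def
      by (fastforce simp: sinhc_def)
  qed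
  finally show ?thesis .
qed

lemma csch_line_integral_mid_height_diff:
  assumes "\<bar>Re w\<bar> < 1"
  shows "csch_line_integral w (mid_height (m - 1)) - csch_line_integral w (mid_height m)
           = 2 * pi * \<i> * residue (csch_kernel w) (\<i> * (of_int m * pi))"
proof -
  define p where "p = \<i> * (of_int m * pi)"
  have "csch_line_integral w (mid_height (m - 1)) - csch_line_integral w (mid_height m)
               = 2 * pi * \<i> * (\<Sum>q\<in>{p}. residue (csch_kernel w) q)"
    unfolding csch_line_integral_def
  proof (rule line_integrals_diff_eq_residues[where a = "pi * (m - 1)" and b = "pi * (m + 1)"])
    show "csch_kernel w holomorphic_on {z. pi * (m - 1) < Im z \<and> Im z < pi * (m + 1)} - {p}"
    proof (rule holomorphic_csch_kernel)
      fix x assume x: "x \<in> {z. pi * (m - 1) < Im z \<and> Im z < pi * (m + 1)} - {p}"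
      have "sinh x \<noteq> 0"
      proof
        assume "sinh x = 0"
        then obtain k :: int where k: "x = \<i> * (of_int k * pi)" by (auto simp: sinh_complex_eq_0_iff)
        with x have "real_of_int (m - 1) * pi < real_of_int k * pi" "real_of_int k * pi < real_of_int (m + 1) * pi"
          by (auto simp: algebra_simps)
        then have "k = m" by (simp add: mult_less_cancel_right)
        with x k show False by (simp add: p_def)
      qed
      then show "x \<noteq> 0 \<and> sinh x \<noteq> 0" by auto
    qed
    show "(\<lambda>n. contour_integral (linepath (Complex (real n) (mid_height (m - 1))) (Complex (real n) (mid_height m)))
            (csch_kernel w)) \<longlonglongrightarrow> 0"
      using csch_kernel_vertical_integral_tendsto_0[OF assms, of 1] by simp
    show "(\<lambda>n. contour_integral (linepath (Complex (- real n) (mid_height m)) (Complex (- real n) (mid_height (m - 1))))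
            (csch_kernel w)) \<longlonglongrightarrow> 0"
      using csch_kernel_vertical_integral_tendsto_0[OF assms, of "- 1"] by simp
    show "(\<lambda>t. csch_kernel w (Complex t (mid_height (m - 1)))) integrable_on UNIV"
      "(\<lambda>t. csch_kernel w (Complex t (mid_height m))) integrable_on UNIV"
      using csch_kernel_mid_height_integrable[OF assms] by blast+
  qed (simp_all add: mid_height_def p_def algebra_simps)
  then show ?thesis by (simp add: p_def)
qed

lemma csch_line_integral_mid_height_step:
  assumes "\<bar>Re w\<bar> < 1" "m \<noteq> 0"
  shows "csch_line_integral w (mid_height (m - 1)) - csch_line_integral w (mid_height m)
           = 2 * exp (of_int m * (\<i> * pi * (w + 1))) / of_int m"
proof -
  have "residue (csch_kernel w) (\<i> * (of_int m * pi)) = exp (of_int m * (\<i> * pi * (w + 1))) / (\<i> * (of_int m * pi))"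
    using residue_csch_kernel_pole[OF assms(2), of w] by (simp add: algebra_simps)
  then show ?thesis
    using assms by (simp add: csch_line_integral_mid_height_diff field_simps)
qed

lemma csch_line_integral_upwards_tendsto_0:
  assumes "\<bar>Re w\<bar> < 1" "0 \<le> Im w"
  shows "(\<lambda>n. csch_line_integral w (mid_height (int n))) \<longlonglongrightarrow> 0"
proof (rule csch_line_integral_mid_height_tendsto_0[OF assms(1)])
  show "\<forall>\<^sub>F n in sequentially. 0 \<le> Im w * mid_height (int n)"
    using assms(2) by (simp add: mid_height_def)
  show "filterlim (\<lambda>n. \<bar>mid_height (int n)\<bar>) at_top sequentially"
    unfolding mid_height_def by simp real_asymp
qed

lemma csch_line_integral_downwards_tendsto_0:
  assumes "\<bar>Re w\<bar> < 1" "Im w \<le> 0"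
  shows "(\<lambda>n. csch_line_integral w (mid_height (- int n))) \<longlonglongrightarrow> 0"
proof (rule csch_line_integral_mid_height_tendsto_0[OF assms(1)])
  show "\<forall>\<^sub>F n in sequentially. 0 \<le> Im w * mid_height (- int n)"
  proof (rule eventually_sequentiallyI[of 1])
    fix n :: nat assume "1 \<le> n"
    then have "mid_height (- int n) \<le> 0" by (simp add: mid_height_def mult_nonneg_nonpos)
    then show "0 \<le> Im w * mid_height (- int n)" using assms(2) by (simp add: mult_nonpos_nonpos)
  qed
  show "filterlim (\<lambda>n. \<bar>mid_height (- int n)\<bar>) at_top sequentially"
    unfolding mid_height_def by simp real_asymp
qed

lemma csch_line_integral_upper:
  assumes "\<bar>Re w\<bar> < 1" "0 < Im w"
  shows "csch_line_integral w (mid_height 0) = - 2 * Ln (1 - exp (\<i> * pi * (w + 1)))"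
proof -
  let ?u = "exp (\<i> * pi * (w + 1))"
  have "(\<lambda>n. csch_line_integral w (mid_height (int n))) \<longlonglongrightarrow> 0"
    using assms by (intro csch_line_integral_upwards_tendsto_0) auto
  moreover have "cmod ?u < 1" using assms(2) by simp
  moreover have "csch_line_integral w (mid_height (int n)) - csch_line_integral w (mid_height (int (Suc n)))
      = 2 * ?u ^ Suc n / of_nat (Suc n)" for n
  proof -
    have "int (Suc n) - 1 = int n" "(of_int (int (Suc n)) :: complex) = of_nat (Suc n)" by simp_all
    then show ?thesis
      using csch_line_integral_mid_height_step[OF assms(1), of "int (Suc n)"] by (simp only: exp_of_nat_mult)
  qed
  ultimately show ?thesis
    using telescoping_eq_Ln[where f = "\<lambda>n. csch_line_integral w (mid_height (int n))"] by simp
qed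

lemma csch_line_integral_lower:
  assumes "\<bar>Re w\<bar> < 1" "Im w < 0"
  shows "csch_line_integral w (mid_height 0) = - 2 * pi * \<i> * w - 2 * Ln (1 - exp (- \<i> * pi * (w + 1)))"
proof -
  let ?v = "exp (- \<i> * pi * (w + 1))"
  define g where "g n = csch_line_integral w (mid_height (- int n))" for n
  have "g \<longlonglongrightarrow> 0"
    unfolding g_def using assms by (intro csch_line_integral_downwards_tendsto_0) auto
  then have "(\<lambda>n. g (Suc n)) \<longlonglongrightarrow> 0" by (rule LIMSEQ_Suc)
  moreover have "cmod ?v < 1" using assms(2) by (simp add: mult_pos_neg)
  moreover have "g (Suc n) - g (Suc (Suc n)) = 2 * ?v ^ Suc n / of_nat (Suc n)" for n
  proof -
    let ?m = "- int (Suc n)" and ?y = "\<i> * pi * (w + 1)"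
    have "?m - 1 = - int (Suc (Suc n))" by simp
    then have "g (Suc n) - g (Suc (Suc n))
        = - (csch_line_integral w (mid_height (?m - 1)) - csch_line_integral w (mid_height ?m))"
      by (simp add: g_def)
    also have "\<dots> = - (2 * exp (of_int ?m * ?y) / of_int ?m)"
      by (subst csch_line_integral_mid_height_step[OF assms(1)]) simp_all
    also have "exp (of_int ?m * ?y) = exp (of_nat (Suc n) * (- ?y))"
      by (rule arg_cong[where f = exp]) (simp add: algebra_simps)
    also have "\<dots> = ?v ^ Suc n"
      unfolding exp_of_nat_mult by simp
    also have "(of_int ?m :: complex) = - of_nat (Suc n)"
      by simp
    finally show ?thesis by (simp only: minus_divide_right minus_minus)
  qed
  ultimately have g1: "g 1 = - 2 * Ln (1 - ?v)"
    using telescoping_eq_Ln[where f = "\<lambda>n. g (Suc n)"] by simp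
  have g10: "g 1 - g 0 = 2 * pi * \<i> * w"
    using csch_line_integral_mid_height_diff[OF assms(1), of 0] by (simp add: g_def residue_csch_kernel_0)
  have "g 0 = g 1 - (g 1 - g 0)" by simp
  also have "\<dots> = - 2 * Ln (1 - ?v) - 2 * pi * \<i> * w"
    by (simp only: g10, simp only: g1)
  finally show ?thesis
    by (simp add: g_def)
qed

lemma csch_line_integral_tendsto_from_above:
  assumes "\<bar>Re w\<bar> < 1" "v \<longlonglongrightarrow> w" "\<And>k. Re (v k) = Re w" "\<And>k. 0 \<le> Im (v k)"
  shows "(\<lambda>k. csch_line_integral (v k) (mid_height 0)) \<longlonglongrightarrow> csch_line_integral w (mid_height 0)"
  unfolding csch_line_integral_def
proof (rule dominated_convergence(2))
  let ?h = "\<lambda>t. 1 / \<bar>mid_height 0\<bar> * (exp (Re w * t) / cosh t)"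
  show "(\<lambda>t. csch_kernel (v k) (Complex t (mid_height 0))) integrable_on UNIV" for k
    using assms(1,3) by (intro csch_kernel_mid_height_integrable) simp
  show "?h integrable_on UNIV"
    using assms(1) by (intro integrable_on_mult_right exp_over_cosh_integrable)
  have "0 < mid_height 0" by (simp add: mid_height_def)
  show "norm (csch_kernel (v k) (Complex t (mid_height 0))) \<le> ?h t" for k t
  proof -
    have "exp (- Im (v k) * mid_height 0) \<le> 1"
      using assms(4)[of k] \<open>0 < mid_height 0\<close> by simp
    then have "exp (- Im (v k) * mid_height 0) / \<bar>mid_height 0\<bar> * (exp (Re w * t) / cosh t) \<le> ?h t"
      by (intro mult_right_mono divide_right_mono) auto
    then show ?thesis
      using norm_csch_kernel_mid_height_le[of "v k" t 0] assms(3)[of k] by simp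
  qed
  have "Complex t (mid_height 0) \<noteq> 0" for t
    using \<open>0 < mid_height 0\<close> by (simp add: complex_eq_iff)
  moreover have "sinh (Complex t (mid_height 0)) \<noteq> 0" for t
    using norm_sinh_mid_height[of t 0] cosh_real_pos[of t] by auto
  ultimately show "(\<lambda>k. csch_kernel (v k) (Complex t (mid_height 0))) \<longlonglongrightarrow> csch_kernel w (Complex t (mid_height 0))" for t
    unfolding csch_kernel_def by (intro tendsto_intros assms(2)) auto
qed

lemma one_minus_exp_2pi_i_real_not_nonpos:
  assumes "0 < x" "x < 1"
  shows "1 - exp (2 * pi * \<i> * complex_of_real x) \<notin> \<real>\<^sub>\<le>\<^sub>0"
proof -
  have "0 < sin (pi * x)" using assms by (intro sin_gt_zero) auto
  then have "cos (2 * (pi * x)) < 1" unfolding cos_double_sin by simp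
  moreover have "exp (2 * pi * \<i> * complex_of_real x) = cis (2 * (pi * x))"
    by (simp add: cis_conv_exp mult_ac)
  ultimately have "0 < Re (1 - exp (2 * pi * \<i> * complex_of_real x))" by simp
  then show ?thesis by (auto simp: complex_nonpos_Reals_iff)
qed

lemma csch_line_integral_eq_L1:
  assumes "0 < Re z" "Re z < 1"
  shows "csch_line_integral (2 * z - 1) (mid_height 0) = - 2 * L1 z"
proof -
  have w: "\<bar>Re (2 * z - 1)\<bar> < 1" using assms by auto
  have upper: "csch_line_integral (2 * z - 1) (mid_height 0) = - 2 * Ln (1 - exp (2 * pi * \<i> * z))"
    if "0 < Im z" "\<bar>Re (2 * z - 1)\<bar> < 1" for z
  proof -
    have "csch_line_integral (2 * z - 1) (mid_height 0) = - 2 * Ln (1 - exp (\<i> * pi * (2 * z - 1 + 1)))"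
      by (rule csch_line_integral_upper) (use that in simp_all)
    also have "\<i> * pi * (2 * z - 1 + 1) = 2 * pi * \<i> * z" by (simp add: algebra_simps)
    finally show ?thesis .
  qed
  consider "0 < Im z" | "Im z < 0" | "Im z = 0" by linarith
  then show ?thesis
  proof cases
    case 1
    then show ?thesis using w by (simp add: upper L1_def)
  next
    case 2
    have "csch_line_integral (2 * z - 1) (mid_height 0)
        = - 2 * pi * \<i> * (2 * z - 1) - 2 * Ln (1 - exp (- \<i> * pi * (2 * z - 1 + 1)))"
      by (rule csch_line_integral_lower[OF w]) (use 2 in simp)
    also have "- \<i> * pi * (2 * z - 1 + 1) = - 2 * pi * \<i> * z" by (simp add: algebra_simps)
    finally show ?thesis using 2 by (simp add: L1_def algebra_simps)
  next
    case 3
    \<comment> \<open>approach \<open>z\<close> from above; \<open>Ln\<close> is continuous at \<open>1 - exp (2 pi i z)\<close>, which has positive real part\<close>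
    define v where "v k = z + \<i> * of_real (inverse (real (Suc k)))" for k
    have "v \<longlonglongrightarrow> z + \<i> * of_real 0"
      unfolding v_def by (intro tendsto_intros LIMSEQ_inverse_real_of_nat)
    then have v: "v \<longlonglongrightarrow> z" by simp
    have "Re (2 * v k - 1) = Re (2 * z - 1)" "0 \<le> Im (2 * v k - 1)" for k
      using 3 by (simp_all add: v_def)
    then have "(\<lambda>k. csch_line_integral (2 * v k - 1) (mid_height 0)) \<longlonglongrightarrow> csch_line_integral (2 * z - 1) (mid_height 0)"
      using v by (intro csch_line_integral_tendsto_from_above w tendsto_intros)
    moreover have "csch_line_integral (2 * v k - 1) (mid_height 0) = - 2 * Ln (1 - exp (2 * pi * \<i> * v k))" for k
      using w 3 by (intro upper) (simp_all add: v_def)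
    moreover have "1 - exp (2 * pi * \<i> * z) \<notin> \<real>\<^sub>\<le>\<^sub>0"
      using one_minus_exp_2pi_i_real_not_nonpos[OF assms] 3 complex_eq_iff[of z "of_real (Re z)"] by simp
    then have "(\<lambda>k. - 2 * Ln (1 - exp (2 * pi * \<i> * v k))) \<longlonglongrightarrow> - 2 * Ln (1 - exp (2 * pi * \<i> * z))"
      by (intro tendsto_intros v)
    ultimately have "csch_line_integral (2 * z - 1) (mid_height 0) = - 2 * Ln (1 - exp (2 * pi * \<i> * z))"
      using LIMSEQ_unique by fastforce
    then show ?thesis using 3 by (simp add: L1_def)
  qed
qed

section \<open>The integral \<open>T_N\<close>\<close>

lemma T_N_eq_indented_line_integral: "T_N N \<gamma> z = indented_line_integral (TN_integrand N \<gamma> z) / 4"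
  by (simp add: T_N_def indented_line_integral_def)

lemma TN_integrand_shift_diff:
  assumes "sinh (\<gamma> * x / of_nat N) \<noteq> 0"
  shows "TN_integrand N \<gamma> (z - \<gamma> / (2 * of_nat N)) x - TN_integrand N \<gamma> (z + \<gamma> / (2 * of_nat N)) x
           = - 2 * csch_kernel (2 * z - 1) x"
proof -
  define u where "u = \<gamma> * x / of_nat N"
  have "N \<noteq> 0" using assms by (cases "N = 0") simp_all
  then have exponents: "(2 * (z - \<gamma> / (2 * of_nat N)) - 1) * x = (2 * z - 1) * x + - u"
    "(2 * (z + \<gamma> / (2 * of_nat N)) - 1) * x = (2 * z - 1) * x + u"
    by (simp_all add: u_def field_simps)
  have "TN_integrand N \<gamma> (z - \<gamma> / (2 * of_nat N)) x - TN_integrand N \<gamma> (z + \<gamma> / (2 * of_nat N)) x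
      = exp ((2 * z - 1) * x) * (exp (- u) - exp u) / (x * sinh x * sinh u)"
    unfolding TN_integrand_def exponents exp_add u_def[symmetric] by (simp add: diff_divide_distrib algebra_simps)
  also have "exp (- u) - exp u = - 2 * sinh u" by (simp add: sinh_field_def)
  also have "exp ((2 * z - 1) * x) * (- 2 * sinh u) / (x * sinh x * sinh u) = - 2 * csch_kernel (2 * z - 1) x"
    using assms by (simp add: csch_kernel_def u_def)
  finally show ?thesis .
qed

lemma pos_if_norm_div_pi_less: "cmod \<gamma> / pi < real N \<Longrightarrow> 0 < real N"
  using divide_nonneg_pos[OF norm_ge_zero pi_gt_zero, of \<gamma>] by linarith

lemma sinh_scaled_nonzero_on_indented_line:
  assumes "0 < Re \<gamma>" "cmod \<gamma> / pi < real N" "z \<in> indented_line"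
  shows "sinh (\<gamma> * z / of_nat N) \<noteq> 0"
  using assms(3)
proof (cases rule: indented_line_cases)
  case 1
  have "0 < real N" using assms(2) by (rule pos_if_norm_div_pi_less)
  then have "Re (\<gamma> * z / of_nat N) = Re \<gamma> * Re z / real N" using 1 by simp
  also have "\<dots> \<noteq> 0" using 1 assms(1) \<open>0 < real N\<close> by auto
  finally show ?thesis by (rule sinh_nonzero_if_Re_nonzero)
next
  case 2
  have "0 < real N" using assms(2) by (rule pos_if_norm_div_pi_less)
  have "cmod (\<gamma> * z / of_nat N) = cmod \<gamma> / real N" using 2 by (simp add: norm_mult norm_divide)
  also have "\<dots> < pi" using assms(2) \<open>0 < real N\<close> by (simp add: field_simps)
  finally show ?thesis
    using assms(1) 2 \<open>0 < real N\<close> by (intro sinh_nonzero_if_norm_less_pi) auto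
qed

lemma TN_integrand_indented_line_integrable:
  assumes "0 < Re \<gamma>" "cmod \<gamma> / pi < real N" and A: "\<bar>Re (2 * z - 1)\<bar> < 1 + Re \<gamma> / real N"
  shows "indented_line_integrable (TN_integrand N \<gamma> z)"
proof -
  have "0 < real N" using assms(2) by (rule pos_if_norm_div_pi_less)
  define r where "r = Re \<gamma> / real N"
  define \<kappa> where "\<kappa> = (1 - exp (- 2 * r)) / 2"
  have "0 < r" using assms(1) \<open>0 < real N\<close> by (simp add: r_def)
  then have "0 < \<kappa>" by (simp add: \<kappa>_def)
  show ?thesis
  proof (rule indented_line_integrableI)
    show "continuous_on indented_line (TN_integrand N \<gamma> z)"
      unfolding TN_integrand_def
      using indented_line_csch_kernel_nonsingular sinh_scaled_nonzero_on_indented_line[OF assms(1,2)]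
      by (intro holomorphic_on_imp_continuous_on) (auto intro!: holomorphic_intros)
    show "0 < 1 + r - \<bar>Re (2 * z - 1)\<bar>" using A by (simp add: r_def)
    fix t :: real assume t: "1 \<le> \<bar>t\<bar>"
    have "Re (2 * z - 1) * t \<le> \<bar>Re (2 * z - 1)\<bar> * \<bar>t\<bar>" by (metis abs_ge_self abs_mult)
    then have numerator: "cmod (exp ((2 * z - 1) * of_real t)) \<le> exp (\<bar>Re (2 * z - 1)\<bar> * \<bar>t\<bar>)" by simp
    have "exp \<bar>t\<bar> / 4 \<le> cmod (sinh (complex_of_real t))"
      using sinh_ge_exp_div_4[OF t] abs_sinh_Re_le_norm_sinh[of "of_real t"] by simp
    moreover have "\<kappa> * exp (r * \<bar>t\<bar>) \<le> cmod (sinh (\<gamma> * of_real t / of_nat N))"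
    proof -
      have "\<kappa> * exp (r * \<bar>t\<bar>) \<le> sinh (r * \<bar>t\<bar>)"
        unfolding \<kappa>_def using \<open>0 < r\<close> t by (intro sinh_ge_exp_mult) auto
      also have "\<dots> = \<bar>sinh (r * t)\<bar>"
        using \<open>0 < r\<close> by (simp add: abs_mult flip: sinh_real_abs)
      also have "\<dots> = \<bar>sinh (Re (\<gamma> * of_real t / of_nat N))\<bar>" by (simp add: r_def)
      also have "\<dots> \<le> cmod (sinh (\<gamma> * of_real t / of_nat N))" by (rule abs_sinh_Re_le_norm_sinh)
      finally show ?thesis .
    qed
    ultimately have "cmod (TN_integrand N \<gamma> z (of_real t))
        \<le> exp (\<bar>Re (2 * z - 1)\<bar> * \<bar>t\<bar>) / (1 * (exp \<bar>t\<bar> / 4) * (\<kappa> * exp (r * \<bar>t\<bar>)))"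
      unfolding TN_integrand_def norm_divide norm_mult using numerator t \<open>0 < \<kappa>\<close>
      by (intro frac_le mult_mono) auto
    also have "\<dots> = 4 / \<kappa> * exp (- (1 + r - \<bar>Re (2 * z - 1)\<bar>) * \<bar>t\<bar>)"
      using \<open>0 < \<kappa>\<close> by (simp add: field_simps flip: exp_add exp_diff)
    finally show "cmod (TN_integrand N \<gamma> z (of_real t)) \<le> 4 / \<kappa> * exp (- (1 + r - \<bar>Re (2 * z - 1)\<bar>) * \<bar>t\<bar>)" .
  qed
qed

theorem lemma2p10:
  fixes \<gamma> z :: complex and N :: nat
  assumes "Re \<gamma> > 0" and "Im \<gamma> < 0"
    and "real N > cmod \<gamma> / pi"
    and "0 < Re z" and "Re z < 1"
  shows "T_N N \<gamma> (z - \<gamma> / (2 * of_nat N)) - T_N N \<gamma> (z + \<gamma> / (2 * of_nat N)) = L1 z"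
proof -
  let ?w = "2 * z - 1" and ?z\<^sub>1 = "z - \<gamma> / (2 * of_nat N)" and ?z\<^sub>2 = "z + \<gamma> / (2 * of_nat N)"
  have w: "\<bar>Re ?w\<bar> < 1" using assms(4,5) by auto
  have "0 < real N" using assms(3) by (rule pos_if_norm_div_pi_less)
  then have "0 < Re \<gamma> / real N" using assms(1) by simp
  moreover have "Re (2 * ?z\<^sub>1 - 1) = Re ?w - Re \<gamma> / real N" "Re (2 * ?z\<^sub>2 - 1) = Re ?w + Re \<gamma> / real N"
    by simp_all
  ultimately have integrable: "indented_line_integrable (TN_integrand N \<gamma> ?z\<^sub>1)"
    "indented_line_integrable (TN_integrand N \<gamma> ?z\<^sub>2)"
    using w by (auto intro!: TN_integrand_indented_line_integrable assms(1,3))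
  have "T_N N \<gamma> ?z\<^sub>1 - T_N N \<gamma> ?z\<^sub>2
      = (indented_line_integral (TN_integrand N \<gamma> ?z\<^sub>1) - indented_line_integral (TN_integrand N \<gamma> ?z\<^sub>2)) / 4"
    by (simp add: T_N_eq_indented_line_integral diff_divide_distrib)
  also have "indented_line_integral (TN_integrand N \<gamma> ?z\<^sub>1) - indented_line_integral (TN_integrand N \<gamma> ?z\<^sub>2)
      = indented_line_integral (\<lambda>x. TN_integrand N \<gamma> ?z\<^sub>1 x - TN_integrand N \<gamma> ?z\<^sub>2 x)"
    by (rule indented_line_integral_diff[OF integrable, symmetric])
  also have "\<dots> = indented_line_integral (\<lambda>x. - 2 * csch_kernel ?w x)"
    by (intro indented_line_integral_cong TN_integrand_shift_diff sinh_scaled_nonzero_on_indented_line assms(1,3))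
  also have "\<dots> = - 2 * csch_line_integral ?w (mid_height 0)"
    unfolding indented_line_integral_mult[OF csch_kernel_indented_line_integrable[OF w]]
      indented_line_integral_csch_kernel[OF w] ..
  also have "\<dots> = 4 * L1 z"
    using csch_line_integral_eq_L1[OF assms(4,5)] by simp
  finally show ?thesis by simp
qed

end
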